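(* Let $d$ be odd and $a,b,c\ge1$ integers with $2a+2b+2c=d+1$. Let $P(x)=\sum_{j=0}^d a_jx^j$ be a real polynomial whose coefficients are all non-zero with signs given by $D(a,b,c)$; explicitly, $a_j>0$ for odd $j\geq 2b+2c+1$, $a_j<0$ for odd $j\leq 2b+2c-1$, $a_j>0$ for even $j\geq 2c$, and $a_j<0$ for even $j\leq 2c-2$. Let $P_o(x)=\sum_{\nu}a_{2\nu+1}x^{2\nu+1}$ and $P_e(x)=\sum_\nu a_{2\nu}x^{2\nu}$ be the odd and even parts of $P$, and suppose $P_o(1)=1$ and $P_e(1)=-1$ (so $P(1)=0$). Then $P^{(m)}(1)>0$ for every $m=1,2,\ldots,d$.
   Context: $D(a,b,c)$ denotes the sign pattern of length $d+1$ (listed from the coefficient of $x^d$ down to the constant term) consisting of $2a$ pluses, followed by $b$ pairs "$-,+$", followed by $2c$ minuses. $P^{(m)}$ denotes the $m$-th derivative of $P$. *)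

theory Defs
  imports "HOL-Computational_Algebra.Polynomial"
begin

definition odd_part_eval :: "real poly \<Rightarrow> real \<Rightarrow> real" where
  "odd_part_eval P x = (\<Sum>j\<le>degree P. if odd j then coeff P j * x ^ j else 0)"

definition even_part_eval :: "real poly \<Rightarrow> real \<Rightarrow> real" where
  "even_part_eval P x = (\<Sum>j\<le>degree P. if even j then coeff P j * x ^ j else 0)"

end

theory Submission
  imports Defs
begin

text \<open>
  At \<open>x = 1\<close> the \<open>m\<close>-th derivative is \<open>\<Sum>j a\<^sub>j j\<^bsup>(m)\<^esup>\<close> with the falling
  factorial \<open>j\<^bsup>(m)\<^esup>\<close> nondecreasing in \<open>j\<close>. The odd coefficients change sign only
  across \<open>T = 2b + 2c\<close>, so their contribution is at least \<open>T\<^bsup>(m)\<^esup> P\<^sub>o(1) = T\<^bsup>(m)\<^esup>\<close>;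
  the even ones change sign only across \<open>t = 2c - 1\<close>, so theirs is at least
  \<open>t\<^bsup>(m)\<^esup> P\<^sub>e(1) = -t\<^bsup>(m)\<^esup>\<close>. For \<open>m \<le> T\<close> we have \<open>t\<^bsup>(m)\<^esup> < T\<^bsup>(m)\<^esup>\<close>; for
  \<open>m > T\<close> every coefficient that survives is positive.
\<close>

definition falling_factorial :: "nat \<Rightarrow> nat \<Rightarrow> nat" where
  "falling_factorial n m = (\<Prod>i<m. n - i)"
\<comment> \<open>with truncated subtraction it vanishes exactly when \<open>n < m\<close>\<close>

lemma falling_factorial_Suc:
  "falling_factorial n (Suc m) = n * falling_factorial (n - 1) m"
  unfolding falling_factorial_def prod.lessThan_Suc_shift by (simp add: diff_diff_left)

lemma pochhammer_Suc_eq_falling_factorial: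
  "pochhammer (Suc n) m = falling_factorial (n + m) m"
proof (induction m)
  case (Suc m)
  have "pochhammer (Suc n) (Suc m) = (n + Suc m) * pochhammer (Suc n) m"
    by (simp add: pochhammer_Suc)
  with Suc show ?case
    by (simp add: falling_factorial_Suc)
qed (simp add: falling_factorial_def)

lemma falling_factorial_mono: "n \<le> n' \<Longrightarrow> falling_factorial n m \<le> falling_factorial n' m"
  unfolding falling_factorial_def by (intro prod_mono) auto

lemma falling_factorial_pos_iff: "falling_factorial n m > 0 \<longleftrightarrow> m \<le> n"
  unfolding falling_factorial_def by (auto simp: not_le intro: bexI[of _ n])

lemma falling_factorial_strict_mono:
  assumes "n < n'" and "0 < m" and "m \<le> n'"
  shows "falling_factorial n m < falling_factorial n' m"
proof -
  obtain k where m: "m = Suc k" using \<open>0 < m\<close> by (cases m) auto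
  have pos: "falling_factorial (n' - 1) k > 0"
    using assms by (simp add: falling_factorial_pos_iff m)
  have "n * falling_factorial (n - 1) k \<le> n * falling_factorial (n' - 1) k"
    using assms by (intro mult_left_mono falling_factorial_mono) simp_all
  also have "\<dots> < n' * falling_factorial (n' - 1) k"
    using pos \<open>n < n'\<close> by simp
  finally show ?thesis
    by (simp add: m falling_factorial_Suc)
qed

lemma poly_higher_pderiv_at_1:
  fixes P :: "'a::{comm_semiring_1,semiring_no_zero_divisors,semiring_char_0} poly"
  assumes "m \<le> degree P"
  shows "poly ((pderiv ^^ m) P) 1 = (\<Sum>j\<le>degree P. coeff P j * of_nat (falling_factorial j m))"
proof -
  let ?t = "\<lambda>j. coeff P j * of_nat (falling_factorial j m)"
  have "poly ((pderiv ^^ m) P) 1 = (\<Sum>i\<le>degree P - m. ?t (i + m))"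
    by (simp add: poly_altdef degree_higher_pderiv coeff_higher_pderiv
        pochhammer_of_nat pochhammer_Suc_eq_falling_factorial mult.commute del: of_nat_Suc)
  also have "\<dots> = (\<Sum>j\<in>{m..degree P}. ?t j)"
    using assms sum.shift_bounds_cl_nat_ivl[of ?t 0 m "degree P - m"] by (simp add: atLeast0AtMost)
  also have "\<dots> = (\<Sum>j\<le>degree P. ?t j)"
    by (intro sum.mono_neutral_left) (auto simp: falling_factorial_pos_iff[symmetric])
  finally show ?thesis .
qed

lemma sum_mult_ge_of_sign_change:
  fixes w f :: "'a::linorder \<Rightarrow> 'b::linordered_idom"
  assumes "mono f"
    and "\<And>j. j \<in> A \<Longrightarrow> j < k \<Longrightarrow> w j \<le> 0"
    and "\<And>j. j \<in> A \<Longrightarrow> k < j \<Longrightarrow> w j \<ge> 0"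
  shows "f k * sum w A \<le> (\<Sum>j\<in>A. w j * f j)"
proof -
  have "w j * (f j - f k) \<ge> 0" if "j \<in> A" for j
    using assms(2,3)[OF that] monoD[OF \<open>mono f\<close>, of j k] monoD[OF \<open>mono f\<close>, of k j]
    by (cases j k rule: linorder_cases) (auto intro: mult_nonpos_nonpos)
  then have "0 \<le> (\<Sum>j\<in>A. w j * (f j - f k))"
    by (rule sum_nonneg)
  then show ?thesis
    by (simp add: algebra_simps sum_distrib_left sum_subtractf)
qed

theorem lemma7:
  fixes P :: "real poly" and d a b c :: nat
  assumes "odd d" and "a \<ge> 1" and "b \<ge> 1" and "c \<ge> 1"
    and "2*a + 2*b + 2*c = d + 1"
    and "degree P = d"
    and "\<forall>j\<le>d. odd j \<and> j \<ge> 2*b + 2*c + 1 \<longrightarrow> coeff P j > 0"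
    and "\<forall>j\<le>d. odd j \<and> j + 1 \<le> 2*b + 2*c \<longrightarrow> coeff P j < 0"
    and "\<forall>j\<le>d. even j \<and> j \<ge> 2*c \<longrightarrow> coeff P j > 0"
    and "\<forall>j\<le>d. even j \<and> j + 2 \<le> 2*c \<longrightarrow> coeff P j < 0"
    and "odd_part_eval P 1 = 1"
    and "even_part_eval P 1 = -1"
  shows "\<forall>m\<in>{1..d}. poly ((pderiv ^^ m) P) 1 > 0"
proof
  fix m assume m: "m \<in> {1..d}"
  define F where "F j = real (falling_factorial j m)" for j
  define w_odd where "w_odd j = (if odd j then coeff P j else 0)" for j
  define w_even where "w_even j = (if even j then coeff P j else 0)" for j
  have F_mono: "mono F"
    by (auto intro!: monoI falling_factorial_mono simp: F_def)
  have deriv: "poly ((pderiv ^^ m) P) 1 = (\<Sum>j\<le>d. coeff P j * F j)"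
    using m assms(6) by (simp add: poly_higher_pderiv_at_1 F_def)
  show "poly ((pderiv ^^ m) P) 1 > 0"
  proof (cases "m \<le> 2*b + 2*c")
    case True
    have "F (2*b + 2*c) * sum w_odd {..d} \<le> (\<Sum>j\<le>d. w_odd j * F j)"
      by (rule sum_mult_ge_of_sign_change[OF F_mono]) (use assms(7,8) in \<open>auto simp: w_odd_def\<close>)
    moreover have "F (2*c - 1) * sum w_even {..d} \<le> (\<Sum>j\<le>d. w_even j * F j)"
      by (rule sum_mult_ge_of_sign_change[OF F_mono]) (use assms(9,10) in \<open>auto simp: w_even_def\<close>)
    moreover have "F (2*c - 1) < F (2*b + 2*c)"
      using True m assms(3) by (simp add: F_def falling_factorial_strict_mono)
    moreover have "sum w_odd {..d} = 1" "sum w_even {..d} = -1"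
      using assms(6,11,12) by (simp_all add: w_odd_def w_even_def odd_part_eval_def even_part_eval_def cong: if_cong)
    moreover have "(\<Sum>j\<le>d. coeff P j * F j) = (\<Sum>j\<le>d. w_odd j * F j) + (\<Sum>j\<le>d. w_even j * F j)"
      by (auto simp: w_odd_def w_even_def simp flip: sum.distrib intro!: sum.cong)
    ultimately show ?thesis
      using deriv by simp
  next
    case False
    have nonneg: "coeff P j * F j \<ge> 0" if "j \<le> d" for j
      using that False assms(7,9) falling_factorial_pos_iff[of j m]
      by (cases "odd j"; cases "m \<le> j") (auto simp: F_def)
    have "coeff P d * F d > 0"
      using m assms(1,2,5,7) by (simp add: F_def falling_factorial_pos_iff)
    then show ?thesis
      unfolding deriv by (intro sum_pos2[where i=d]) (auto intro: nonneg)
  qed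
qed

end
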